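(* For every integer $l\ge1$, let $\mathcal{I}_6(l)$ be the index coding instance on $[4l+1]$ with $A_{2i-1}=\{2j: j\in[2l]\setminus\{i\}\}\cup\{4l+1\}$ and $A_{2i}=\{2i-1\}$ for $i\in[2l]$, and $A_{4l+1}=\{2i-1: i\in[2l]\}$. Then $\beta_{\text{R}}(\mathcal{I}_6(l))=3l+\tfrac12$.
   Context: Recursive scheme for an instance with side-information sets $A_i\subseteq[m]\setminus\{i\}$: set $\beta_{\text{R}}(\{i\})=1$ for all $i\in[m]$, and for $M\subseteq[m]$ with $|M|\ge2$ define recursively $$\beta_{\text{R}}(M)=\min\max_{i\in M}\sum_{j\in[n]:\,M_j\not\subseteq A_i}\gamma_j\,\beta_{\text{R}}(M_j),$$ where the minimum is over finite families of nonempty proper subsets $M_1,\dots,M_n\subsetneq M$ and weights $\gamma_j\in[0,1]$ with $\sum_{j:\,i\in M_j}\gamma_j\ge1$ for every $i\in M$. Then $\beta_{\text{R}}(\mathcal{I})=\beta_{\text{R}}([m])$. *)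

theory Defs
  imports Complex_Main
begin

definition valid_family ::
  "nat set \<Rightarrow> nat \<Rightarrow> (nat \<Rightarrow> nat set) \<Rightarrow> (nat \<Rightarrow> real) \<Rightarrow> bool" where
  "valid_family M n Ms g \<longleftrightarrow>
     (\<forall>j<n. Ms j \<noteq> {} \<and> Ms j \<subset> M \<and> 0 \<le> g j \<and> g j \<le> 1) \<and>
     (\<forall>i\<in>M. (\<Sum>j\<in>{j. j < n \<and> i \<in> Ms j}. g j) \<ge> 1)"

definition family_cost ::
  "(nat \<Rightarrow> nat set) \<Rightarrow> (nat set \<Rightarrow> real) \<Rightarrow> nat set \<Rightarrow> nat \<Rightarrow> (nat \<Rightarrow> nat set) \<Rightarrow> (nat \<Rightarrow> real) \<Rightarrow> real" where
  "family_cost A f M n Ms g =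
     Max ((\<lambda>i. \<Sum>j\<in>{j. j < n \<and> \<not> Ms j \<subseteq> A i}. g j * f (Ms j)) ` M)"

text \<open>The minimum of the paper is rendered as an infimum (it is attained).\<close>

definition betaR_set :: "(nat \<Rightarrow> nat set) \<Rightarrow> nat set \<Rightarrow> real" where
  "betaR_set A = wfrec finite_psubset
     (\<lambda>f M. if card M = 1 then 1
            else Inf {family_cost A f M n Ms g | n Ms g. valid_family M n Ms g})"

definition betaR :: "nat \<Rightarrow> (nat \<Rightarrow> nat set) \<Rightarrow> real" where
  "betaR m A = betaR_set A {1..m}"

definition I6 :: "nat \<Rightarrow> nat \<Rightarrow> nat set" where
  "I6 l k =
     (if k = 4*l+1 then {2*i - 1 | i. i \<in> {1..2*l}}
      else if odd k then {2*j | j. j \<in> {1..2*l} - {(k+1) div 2}} \<union> {4*l+1}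
      else {k - 1})"

end

theory Submission
  imports Defs
begin

text \<open>
  Lower bound: weigh every even user with 1 and every odd user (including \<open>4l+1\<close>) with 1/2,
  for a total of \<open>3l + 1/2\<close>; \<open>\<beta>\<^sub>R(S)\<close> dominates the weight of every nonempty \<open>S\<close>, by induction
  on \<open>S\<close>. If \<open>S\<close> contains at most one even user, then both \<open>S - {4l+1}\<close> and the even users of \<open>S\<close>
  together with \<open>4l+1\<close> are acyclic, and the two acyclic-set bounds average to the weight.
  Otherwise average the cost of a family over the \<open>k \<ge> 2\<close> even users \<open>e\<close> of \<open>S\<close>: a piece
  known to \<open>e\<close> is the singleton \<open>{e-1}\<close> of weight 1/2, so it is still paid for by the other
  \<open>k - 1 \<ge> k/2\<close> even users.

  Upper bound: cut \<open>[4l+1]\<close> into the \<open>2l+1\<close> blocks \<open>{2b+1, 2b+2}\<close>, the last one being \<open>{4l+1}\<close>,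
  and take with weight 1/2 the unions of cyclically adjacent blocks. Every user in such a piece
  knows another element of it, so a piece costs at most its size minus one, and the total is
  \<open>(4l+1) - (2l+1)/2\<close>.
\<close>

section \<open>Families and the recursive scheme\<close>

lemma family_cost_cong:
  "(\<And>j. j < n \<Longrightarrow> f (Ms j) = f' (Ms j)) \<Longrightarrow> family_cost A f M n Ms g = family_cost A f' M n Ms g"
  unfolding family_cost_def by (intro arg_cong[where f=Max] image_cong refl sum.cong) auto

lemma valid_familyD:
  assumes "valid_family M n Ms g" "j < n"
  shows "Ms j \<noteq> {}" "Ms j \<subset> M" "0 \<le> g j" "g j \<le> 1"
  using assms unfolding valid_family_def by auto

lemma betaR_set_eq:
  assumes "finite M"
  shows "betaR_set A M = (if card M = 1 then 1 else
     Inf {family_cost A (betaR_set A) M n Ms g | n Ms g. valid_family M n Ms g})"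
proof -
  have "family_cost A (cut (betaR_set A) finite_psubset M) M n Ms g = family_cost A (betaR_set A) M n Ms g"
    if "valid_family M n Ms g" for n Ms g
    using assms valid_familyD(2)[OF that]
    by (intro family_cost_cong) (auto simp: finite_psubset_def cut_apply)
  then have "{family_cost A (cut (betaR_set A) finite_psubset M) M n Ms g | n Ms g. valid_family M n Ms g}
     = {family_cost A (betaR_set A) M n Ms g | n Ms g. valid_family M n Ms g}"
    by (intro Collect_cong) metis
  then show ?thesis
    unfolding betaR_set_def by (subst wfrec[OF wf_finite_psubset]) simp
qed

lemma betaR_set_singleton [simp]: "betaR_set A {x} = 1"
  by (simp add: betaR_set_eq)

lemma family_cost_ge:
  assumes "finite M" "i \<in> M"
  shows "(\<Sum>j | j < n \<and> \<not> Ms j \<subseteq> A i. g j * f (Ms j)) \<le> family_cost A f M n Ms g"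
  unfolding family_cost_def using assms by (intro Max_ge) auto

lemma family_cost_le_sum:
  assumes "finite M" "M \<noteq> {}" "\<And>j. j < n \<Longrightarrow> 0 \<le> g j * f (Ms j)"
  shows "family_cost A f M n Ms g \<le> (\<Sum>j<n. g j * f (Ms j))"
  unfolding family_cost_def using assms by (intro Max.boundedI) (auto intro!: sum_mono2)

lemma family_cost_nonneg:
  assumes "finite M" "M \<noteq> {}" "\<And>j. j < n \<Longrightarrow> 0 \<le> g j * f (Ms j)"
  shows "0 \<le> family_cost A f M n Ms g"
proof -
  obtain i where "i \<in> M" using assms(2) by blast
  have "0 \<le> (\<Sum>j | j < n \<and> \<not> Ms j \<subseteq> A i. g j * f (Ms j))"
    using assms(3) by (intro sum_nonneg) auto
  also have "\<dots> \<le> family_cost A f M n Ms g"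
    using assms(1) \<open>i \<in> M\<close> by (rule family_cost_ge)
  finally show ?thesis .
qed

lemma family_cost_average:
  fixes g :: "nat \<Rightarrow> real"
  assumes "finite M" "K \<subseteq> M"
  shows "(\<Sum>j<n. g j * f (Ms j) * card {e \<in> K. \<not> Ms j \<subseteq> A e}) \<le> card K * family_cost A f M n Ms g"
proof -
  have "finite K" using assms finite_subset by blast
  have "(\<Sum>j<n. g j * f (Ms j) * card {e \<in> K. \<not> Ms j \<subseteq> A e})
      = (\<Sum>j<n. \<Sum>e\<in>K. if \<not> Ms j \<subseteq> A e then g j * f (Ms j) else 0)"
    using \<open>finite K\<close> by (simp add: sum.If_cases Int_def mult.commute)
  also have "\<dots> = (\<Sum>e\<in>K. \<Sum>j | j < n \<and> \<not> Ms j \<subseteq> A e. g j * f (Ms j))"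
    by (subst sum.swap) (simp add: sum.If_cases Int_def conj_commute)
  also have "\<dots> \<le> card K * family_cost A f M n Ms g"
    using assms by (intro sum_bounded_above family_cost_ge) auto
  finally show ?thesis .
qed

lemma sum_pieces_swap:
  fixes g w :: "nat \<Rightarrow> real"
  assumes "finite M" "\<And>j. j < n \<Longrightarrow> Ms j \<subseteq> M"
  shows "(\<Sum>j<n. g j * (\<Sum>x\<in>Ms j. w x)) = (\<Sum>x\<in>M. w x * (\<Sum>j | j < n \<and> x \<in> Ms j. g j))"
proof -
  have "g j * (\<Sum>x\<in>Ms j. w x) = (\<Sum>x\<in>M. if x \<in> Ms j then g j * w x else 0)" if "j < n" for j
  proof -
    have "(\<Sum>x\<in>M. if x \<in> Ms j then g j * w x else 0) = (\<Sum>x | x \<in> M \<and> x \<in> Ms j. g j * w x)"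
      by (simp add: sum.inter_filter[OF assms(1)])
    also have "{x. x \<in> M \<and> x \<in> Ms j} = Ms j" using assms(2)[OF that] by blast
    finally show ?thesis by (simp add: sum_distrib_left)
  qed
  then have "(\<Sum>j<n. g j * (\<Sum>x\<in>Ms j. w x)) = (\<Sum>j<n. \<Sum>x\<in>M. if x \<in> Ms j then g j * w x else 0)"
    by simp
  also have "\<dots> = (\<Sum>x\<in>M. \<Sum>j<n. if x \<in> Ms j then g j * w x else 0)"
    by (rule sum.swap)
  also have "\<dots> = (\<Sum>x\<in>M. w x * (\<Sum>j | j < n \<and> x \<in> Ms j. g j))"
  proof (rule sum.cong[OF refl])
    fix x
    have "(\<Sum>j<n. if x \<in> Ms j then g j * w x else 0) = (\<Sum>j | j \<in> {..<n} \<and> x \<in> Ms j. g j * w x)"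
      by (rule sum.inter_filter[OF finite_lessThan, symmetric])
    also have "{j. j \<in> {..<n} \<and> x \<in> Ms j} = {j. j < n \<and> x \<in> Ms j}" by auto
    finally show "(\<Sum>j<n. if x \<in> Ms j then g j * w x else 0) = w x * (\<Sum>j | j < n \<and> x \<in> Ms j. g j)"
      by (simp add: sum_distrib_left mult.commute)
  qed
  finally show ?thesis .
qed

lemma sum_le_sum_pieces:
  fixes w :: "nat \<Rightarrow> real"
  assumes "valid_family M n Ms g" "finite M" "\<And>x. x \<in> M \<Longrightarrow> 0 \<le> w x"
  shows "(\<Sum>x\<in>M. w x) \<le> (\<Sum>j<n. g j * (\<Sum>x\<in>Ms j. w x))"
proof -
  have "w x \<le> w x * (\<Sum>j | j < n \<and> x \<in> Ms j. g j)" if "x \<in> M" for x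
  proof -
    have "1 \<le> (\<Sum>j | j < n \<and> x \<in> Ms j. g j)"
      using assms(1) that unfolding valid_family_def by blast
    then show ?thesis using mult_left_mono[OF _ assms(3)[OF that]] by fastforce
  qed
  then have "(\<Sum>x\<in>M. w x) \<le> (\<Sum>x\<in>M. w x * (\<Sum>j | j < n \<and> x \<in> Ms j. g j))"
    by (rule sum_mono)
  also have "\<dots> = (\<Sum>j<n. g j * (\<Sum>x\<in>Ms j. w x))"
    using assms valid_familyD(2) by (intro sum_pieces_swap[symmetric]) blast+
  finally show ?thesis .
qed

lemma card_le_sum_pieces_not_within:
  assumes "valid_family S n Ms g" "finite S" "B \<inter> (S \<inter> X) = {}"
  shows "real (card (S \<inter> X)) \<le> (\<Sum>j | j < n \<and> \<not> Ms j \<subseteq> B. g j * real (card (Ms j \<inter> X)))"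
proof -
  have pieces_sub: "Ms j \<subseteq> S" if "j < n" for j
    using valid_familyD(2)[OF assms(1) that] by blast
  have "real (card (S \<inter> X)) = (\<Sum>x\<in>S. of_bool (x \<in> X))"
    using assms(2) by simp
  also have "\<dots> \<le> (\<Sum>j<n. g j * (\<Sum>x\<in>Ms j. of_bool (x \<in> X)))"
    using sum_le_sum_pieces[OF assms(1,2), of "\<lambda>x. of_bool (x \<in> X)"] by simp
  also have "\<dots> = (\<Sum>j | j < n \<and> \<not> Ms j \<subseteq> B. g j * real (card (Ms j \<inter> X)))"
  proof (rule sum.mono_neutral_cong_right)
    show "\<forall>j\<in>{..<n} - {j. j < n \<and> \<not> Ms j \<subseteq> B}. g j * (\<Sum>x\<in>Ms j. of_bool (x \<in> X)) = 0"
    proof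
      fix j assume "j \<in> {..<n} - {j. j < n \<and> \<not> Ms j \<subseteq> B}"
      then have "Ms j \<subseteq> B" "Ms j \<subseteq> S" using pieces_sub by auto
      then have "Ms j \<inter> X = {}" using assms(3) by blast
      then show "g j * (\<Sum>x\<in>Ms j. of_bool (x \<in> X)) = 0" by (simp add: disjoint_iff)
    qed
    show "g j * (\<Sum>x\<in>Ms j. of_bool (x \<in> X)) = g j * real (card (Ms j \<inter> X))"
      if "j \<in> {j. j < n \<and> \<not> Ms j \<subseteq> B}" for j
      using that finite_subset[OF pieces_sub assms(2)] by simp
  qed auto
  finally show ?thesis .
qed

lemma valid_family_singletons:
  assumes "finite M" "card M \<ge> 2"
  shows "valid_family M (card M) (\<lambda>j. {sorted_list_of_set M ! j}) (\<lambda>_. 1)"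
proof -
  let ?xs = "sorted_list_of_set M"
  have set_xs: "set ?xs = M" and len_xs: "length ?xs = card M"
    using assms(1) by simp_all
  have "M \<noteq> {x}" for x using assms(2) by auto
  then have piece: "{?xs ! j} \<subset> M" if "j < card M" for j
    using nth_mem[of j ?xs] that set_xs len_xs by auto
  have cover: "1 \<le> (\<Sum>j | j < card M \<and> i \<in> {?xs ! j}. 1::real)" if "i \<in> M" for i
  proof -
    have "i \<in> set ?xs" using that set_xs by simp
    then obtain k where "k < card M" "?xs ! k = i"
      using len_xs by (metis in_set_conv_nth)
    then have "{j. j < card M \<and> i \<in> {?xs ! j}} \<noteq> {}" by auto
    then show ?thesis by (simp add: Suc_le_eq card_gt_0_iff)
  qed
  show ?thesis
    unfolding valid_family_def using piece cover by simp
qed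

lemma betaR_set_geI:
  assumes "finite M" "card M \<ge> 2"
    and "\<And>n Ms g. valid_family M n Ms g \<Longrightarrow> v \<le> family_cost A (betaR_set A) M n Ms g"
  shows "v \<le> betaR_set A M"
proof -
  have "v \<le> Inf {family_cost A (betaR_set A) M n Ms g | n Ms g. valid_family M n Ms g}"
  proof (rule cInf_greatest)
    show "{family_cost A (betaR_set A) M n Ms g | n Ms g. valid_family M n Ms g} \<noteq> {}"
      using valid_family_singletons[OF assms(1,2)] by blast
  qed (use assms(3) in blast)
  then show ?thesis using assms(2) by (simp add: betaR_set_eq[OF assms(1)])
qed

section \<open>Acyclic sets and upper bounds\<close>

definition acyclic_set :: "(nat \<Rightarrow> nat set) \<Rightarrow> nat set \<Rightarrow> bool" where
  "acyclic_set A X \<longleftrightarrow> (\<forall>Y \<subseteq> X. Y \<noteq> {} \<longrightarrow> (\<exists>u\<in>Y. A u \<inter> Y = {}))"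

lemma acyclic_setI_rank:
  fixes r :: "nat \<Rightarrow> nat"
  assumes "\<And>u v. u \<in> X \<Longrightarrow> v \<in> X \<Longrightarrow> v \<in> A u \<Longrightarrow> r v < r u"
  shows "acyclic_set A X"
  unfolding acyclic_set_def
proof (intro allI impI)
  fix Y assume "Y \<subseteq> X" "Y \<noteq> {}"
  then obtain y where "y \<in> Y" by blast
  then obtain u where "u \<in> Y" and min: "\<forall>v. v \<in> Y \<longrightarrow> r u \<le> r v"
    using ex_has_least_nat[of "\<lambda>u. u \<in> Y" y r] by blast
  have "v \<notin> A u" if "v \<in> Y" for v
  proof
    assume "v \<in> A u"
    then have "r v < r u" using assms \<open>u \<in> Y\<close> that \<open>Y \<subseteq> X\<close> by blast
    with min that show False by (simp add: leD)
  qed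
  then show "\<exists>u\<in>Y. A u \<inter> Y = {}" using \<open>u \<in> Y\<close> by blast
qed

lemma betaR_set_ge_card_acyclic:
  assumes "finite S" "S \<noteq> {}" "acyclic_set A X"
  shows "real (card (S \<inter> X)) \<le> betaR_set A S"
  using assms(1,2)
proof (induction S rule: finite_psubset_induct)
  case (psubset S)
  show ?case
  proof (cases "card S = 1")
    case True
    then have "betaR_set A S = 1" by (simp add: betaR_set_eq psubset.hyps(1))
    moreover have "card (S \<inter> X) \<le> card S" using psubset.hyps(1) by (simp add: card_mono)
    ultimately show ?thesis using True by simp
  next
    case False
    moreover have "card S \<noteq> 0" using psubset.hyps(1) psubset.prems by simp
    ultimately have "card S \<ge> 2" by linarith
    show ?thesis
    proof (rule betaR_set_geI[OF psubset.hyps(1) \<open>card S \<ge> 2\<close>])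
      fix n Ms g assume vf: "valid_family S n Ms g"
      have IH: "real (card (Ms j \<inter> X)) \<le> betaR_set A (Ms j)" if "j < n" for j
        using psubset.IH valid_familyD[OF vf that] by blast
      have terms_nonneg: "0 \<le> g j * betaR_set A (Ms j)" if "j < n" for j
        using order_trans[OF of_nat_0_le_iff IH[OF that]] valid_familyD(3)[OF vf that] by simp
      show "real (card (S \<inter> X)) \<le> family_cost A (betaR_set A) S n Ms g"
      proof (cases "S \<inter> X = {}")
        case True
        have "0 \<le> family_cost A (betaR_set A) S n Ms g"
          using family_cost_nonneg[OF psubset.hyps(1) psubset.prems, of n g "betaR_set A" Ms] terms_nonneg
          by blast
        then show ?thesis using True by simp
      next
        case False
        then obtain u where u: "u \<in> S" "A u \<inter> (S \<inter> X) = {}"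
          using assms(3) unfolding acyclic_set_def by blast
        have "real (card (S \<inter> X)) \<le> (\<Sum>j | j < n \<and> \<not> Ms j \<subseteq> A u. g j * real (card (Ms j \<inter> X)))"
          using card_le_sum_pieces_not_within[OF vf psubset.hyps(1) u(2)] .
        also have "\<dots> \<le> (\<Sum>j | j < n \<and> \<not> Ms j \<subseteq> A u. g j * betaR_set A (Ms j))"
          using IH valid_familyD(3)[OF vf] by (intro sum_mono mult_left_mono) auto
        also have "\<dots> \<le> family_cost A (betaR_set A) S n Ms g"
          using psubset.hyps(1) u(1) by (rule family_cost_ge)
        finally show ?thesis .
      qed
    qed
  qed
qed

lemma betaR_set_nonneg: "finite S \<Longrightarrow> S \<noteq> {} \<Longrightarrow> 0 \<le> betaR_set A S"
  using betaR_set_ge_card_acyclic[of S A "{}"] by (simp add: acyclic_set_def)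

lemma valid_family_term_nonneg:
  assumes "valid_family M n Ms g" "finite M" "j < n"
  shows "0 \<le> g j * betaR_set A (Ms j)"
proof -
  have "finite (Ms j)" using valid_familyD(2)[OF assms(1,3)] assms(2) finite_subset by blast
  then show ?thesis
    using betaR_set_nonneg valid_familyD(1,3)[OF assms(1,3)] by simp
qed

lemma betaR_set_le_family_cost:
  assumes "finite M" "card M \<ge> 2" "valid_family M n Ms g"
  shows "betaR_set A M \<le> family_cost A (betaR_set A) M n Ms g"
proof -
  have "M \<noteq> {}" using assms(2) by auto
  have "0 \<le> family_cost A (betaR_set A) M n' Ms' g'" if "valid_family M n' Ms' g'" for n' Ms' g'
    using family_cost_nonneg[OF assms(1) \<open>M \<noteq> {}\<close>, of n' g' "betaR_set A" Ms']
      valid_family_term_nonneg[OF that assms(1)] by blast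
  then have "Inf {family_cost A (betaR_set A) M n Ms g | n Ms g. valid_family M n Ms g}
      \<le> family_cost A (betaR_set A) M n Ms g"
    using assms(3) by (intro cInf_lower) (auto simp: bdd_below_def)
  then show ?thesis using assms(2) by (simp add: betaR_set_eq[OF assms(1)])
qed

lemma betaR_set_le_sum_pieces:
  assumes "finite M" "card M \<ge> 2" "valid_family M n Ms g"
  shows "betaR_set A M \<le> (\<Sum>j<n. g j * betaR_set A (Ms j))"
proof -
  have "M \<noteq> {}" using assms(2) by auto
  have "family_cost A (betaR_set A) M n Ms g \<le> (\<Sum>j<n. g j * betaR_set A (Ms j))"
    using family_cost_le_sum[OF assms(1) \<open>M \<noteq> {}\<close>, of n g "betaR_set A" Ms]
      valid_family_term_nonneg[OF assms(3,1)] by blast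
  with betaR_set_le_family_cost[where A = A, OF assms] show ?thesis by linarith
qed

lemma betaR_set_le_card_unknown:
  assumes "finite M" "card M \<ge> 2" "\<And>i. i \<in> M \<Longrightarrow> card (M - A i) \<le> K"
  shows "betaR_set A M \<le> K"
proof -
  let ?xs = "sorted_list_of_set M"
  let ?Ms = "\<lambda>j. {?xs ! j}"
  have "M \<noteq> {}" using assms(2) by auto
  have "(\<Sum>j | j < card M \<and> \<not> ?Ms j \<subseteq> A i. 1 * betaR_set A (?Ms j)) \<le> K" if "i \<in> M" for i
  proof -
    let ?J = "{j. j < card M \<and> \<not> ?Ms j \<subseteq> A i}"
    have "inj_on (nth ?xs) ?J"
      using assms(1) by (intro inj_on_nth) auto
    moreover have "nth ?xs ` ?J \<subseteq> M - A i"
      using assms(1) nth_mem[of _ ?xs] by auto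
    ultimately have "card ?J \<le> card (M - A i)"
      using assms(1) card_inj_on_le by blast
    then show ?thesis using assms(3)[OF that] by simp
  qed
  then have "family_cost A (betaR_set A) M (card M) ?Ms (\<lambda>_. 1) \<le> K"
    unfolding family_cost_def using assms(1) \<open>M \<noteq> {}\<close> by (intro Max.boundedI) auto
  then show ?thesis
    using betaR_set_le_family_cost[where A = A, OF assms(1,2) valid_family_singletons[OF assms(1,2)]]
    by linarith
qed

section \<open>The weight lower bound for \<open>I6\<close>\<close>

lemma I6_even: "even k \<Longrightarrow> I6 l k = {k - 1}"
  unfolding I6_def by auto

lemma I6_center: "I6 l (4*l+1) = {x. odd x \<and> x < 4*l}"
proof -
  have "(\<exists>i. x = 2*i - 1 \<and> i \<in> {1..2*l}) \<longleftrightarrow> odd x \<and> x < 4*l" for x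
  proof
    assume "odd x \<and> x < 4*l"
    then show "\<exists>i. x = 2*i - 1 \<and> i \<in> {1..2*l}"
      by (intro exI[of _ "(x + 1) div 2"]) (auto elim!: oddE)
  qed auto
  then show ?thesis unfolding I6_def by auto
qed

lemma I6_odd:
  assumes "odd k" "k \<noteq> 4*l+1"
  shows "I6 l k = insert (4*l+1) {x. even x \<and> 0 < x \<and> x \<le> 4*l \<and> x \<noteq> k+1}"
proof -
  have "(\<exists>j. x = 2*j \<and> j \<in> {1..2*l} - {(k+1) div 2}) \<longleftrightarrow> even x \<and> 0 < x \<and> x \<le> 4*l \<and> x \<noteq> k+1" for x
  proof
    assume "even x \<and> 0 < x \<and> x \<le> 4*l \<and> x \<noteq> k+1"
    then show "\<exists>j. x = 2*j \<and> j \<in> {1..2*l} - {(k+1) div 2}"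
      using assms(1) by (intro exI[of _ "x div 2"]) (auto elim!: evenE oddE)
  qed (use assms(1) in \<open>auto elim!: oddE\<close>)
  then show ?thesis using assms unfolding I6_def by auto
qed

definition I6_weight :: "nat \<Rightarrow> real" where
  "I6_weight x = (if even x then 1 else 1/2)"

lemma two_sum_I6_weight:
  assumes "S \<subseteq> {1..4*l+1}"
  shows "2 * (\<Sum>x\<in>S. I6_weight x) = card (S - {4*l+1}) + card {x\<in>S. even x \<or> x = 4*l+1}"
proof -
  have "finite S" using assms finite_subset by blast
  have "2 * I6_weight x = of_bool (x \<noteq> 4*l+1) + of_bool (even x \<or> x = 4*l+1)" for x
    by (auto simp: I6_weight_def)
  then have "2 * (\<Sum>x\<in>S. I6_weight x)
      = (\<Sum>x\<in>S. of_bool (x \<noteq> 4*l+1)) + (\<Sum>x\<in>S. of_bool (even x \<or> x = 4*l+1))"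
    by (simp add: sum_distrib_left sum.distrib)
  also have "\<dots> = card {x\<in>S. x \<noteq> 4*l+1} + card {x\<in>S. even x \<or> x = 4*l+1}"
    using \<open>finite S\<close> by (simp only: sum_of_bool_eq Int_def mem_Collect_eq)
  also have "{x\<in>S. x \<noteq> 4*l+1} = S - {4*l+1}" by blast
  finally show ?thesis .
qed

lemma I6_acyclic_even_center:
  assumes "S \<subseteq> {1..4*l+1}"
  shows "acyclic_set (I6 l) {x\<in>S. even x \<or> x = 4*l+1}"
proof (rule acyclic_setI_rank[where r = "\<lambda>_. 0"])
  fix u v assume u: "u \<in> {x\<in>S. even x \<or> x = 4*l+1}" and v: "v \<in> {x\<in>S. even x \<or> x = 4*l+1}"
    and "v \<in> I6 l u"
  show "(0::nat) < 0"
  proof (cases "even u")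
    case True
    then have "v = u - 1" using \<open>v \<in> I6 l u\<close> by (simp add: I6_even)
    moreover have "1 \<le> u" "u \<le> 4*l+1" using u assms by auto
    ultimately show ?thesis using v True by auto
  next
    case False
    then have "u = 4*l+1" using u by simp
    then have "odd v \<and> v < 4*l" using \<open>v \<in> I6 l u\<close> I6_center by blast
    then show ?thesis using v by simp
  qed
qed

lemma I6_acyclic_few_evens:
  assumes "S \<subseteq> {1..4*l+1}" "card {x\<in>S. even x} \<le> 1"
  shows "acyclic_set (I6 l) (S - {4*l+1})"
proof (rule acyclic_setI_rank[where r = "\<lambda>x. if even x then 1 else if x + 1 \<in> S then 0 else 2"])
  have "finite {x\<in>S. even x}" using assms(1) finite_subset by fastforce
  then have unique_even: "a = b" if "a \<in> S" "b \<in> S" "even a" "even b" for a b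
    using assms(2) that by (auto simp: card_le_Suc0_iff_eq)
  fix u v assume u: "u \<in> S - {4*l+1}" and v: "v \<in> S - {4*l+1}" and "v \<in> I6 l u"
  show "(if even v then 1 else if v + 1 \<in> S then 0 else 2)
      < (if even u then 1 else if u + 1 \<in> S then 0 else (2::nat))"
  proof (cases "even u")
    case True
    then have "v = u - 1" using \<open>v \<in> I6 l u\<close> by (simp add: I6_even)
    moreover have "u \<ge> 2" using u assms(1) True by (auto elim!: evenE)
    ultimately show ?thesis using u True by auto
  next
    case False
    then have "even v" "v \<noteq> u + 1" using u v \<open>v \<in> I6 l u\<close> by (auto simp: I6_odd)
    then have "u + 1 \<notin> S" using unique_even[of "u + 1" v] v False by auto
    then show ?thesis using False \<open>even v\<close> by simp
  qed
qed

lemma I6_weight_le_betaR_set_few_evens: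
  assumes "S \<subseteq> {1..4*l+1}" "S \<noteq> {}" "card {x\<in>S. even x} \<le> 1"
  shows "(\<Sum>x\<in>S. I6_weight x) \<le> betaR_set (I6 l) S"
proof -
  have "finite S" using assms(1) finite_subset by blast
  have "card (S - {4*l+1}) \<le> betaR_set (I6 l) S"
    using betaR_set_ge_card_acyclic[OF \<open>finite S\<close> assms(2) I6_acyclic_few_evens[OF assms(1,3)]]
    by (simp add: Int_absorb1)
  moreover have "card {x\<in>S. even x \<or> x = 4*l+1} \<le> betaR_set (I6 l) S"
    using betaR_set_ge_card_acyclic[OF \<open>finite S\<close> assms(2) I6_acyclic_even_center[OF assms(1)]]
    by (simp add: Int_absorb1)
  ultimately show ?thesis using two_sum_I6_weight[OF assms(1)] by linarith
qed

lemma I6_piece_average: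
  assumes "K \<subseteq> {1..4*l+1}" "\<forall>e\<in>K. even e" "card K \<ge> 2" "M \<noteq> {}"
    and "(\<Sum>x\<in>M. I6_weight x) \<le> betaR_set (I6 l) M"
  shows "card K * (\<Sum>x\<in>M. I6_weight x) \<le> card {e\<in>K. \<not> M \<subseteq> I6 l e} * betaR_set (I6 l) M"
proof (cases "\<exists>e0\<in>K. M \<subseteq> I6 l e0")
  case True
  then obtain e0 where e0: "e0 \<in> K" "M \<subseteq> I6 l e0" by blast
  have pos: "e \<ge> 2" if "e \<in> K" for e
  proof -
    have "1 \<le> e" "even e" using assms(1,2) that by auto
    then show ?thesis by (auto elim!: evenE)
  qed
  have M: "M = {e0 - 1}"
    using e0 assms(2,4) by (simp add: I6_even subset_singleton_iff)
  have "M \<subseteq> I6 l e \<longleftrightarrow> e = e0" if "e \<in> K" for e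
    using pos[OF that] pos[OF e0(1)] assms(2) that e0(1) by (auto simp: M I6_even)
  then have "{e\<in>K. \<not> M \<subseteq> I6 l e} = K - {e0}" by auto
  moreover have "finite K" using assms(3) card.infinite by force
  moreover have "odd (e0 - 1)" using pos[OF e0(1)] assms(2) e0(1) by simp
  ultimately show ?thesis
    using e0(1) assms(3) by (simp add: M I6_weight_def of_nat_diff)
next
  case False
  then have "{e\<in>K. \<not> M \<subseteq> I6 l e} = K" by auto
  then show ?thesis using assms(5) by (simp add: mult_left_mono)
qed

lemma I6_weight_le_family_cost_many_evens:
  assumes "S \<subseteq> {1..4*l+1}" "card {x\<in>S. even x} \<ge> 2" "valid_family S n Ms g"
    and IH: "\<And>j. j < n \<Longrightarrow> (\<Sum>x\<in>Ms j. I6_weight x) \<le> betaR_set (I6 l) (Ms j)"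
  shows "(\<Sum>x\<in>S. I6_weight x) \<le> family_cost (I6 l) (betaR_set (I6 l)) S n Ms g"
proof -
  define K where "K = {x\<in>S. even x}"
  have "finite S" using assms(1) finite_subset by blast
  have K: "K \<subseteq> {1..4*l+1}" "\<forall>e\<in>K. even e" "card K \<ge> 2"
    unfolding K_def using assms(1,2) by auto
  have piece: "card K * (\<Sum>x\<in>Ms j. I6_weight x)
      \<le> card {e\<in>K. \<not> Ms j \<subseteq> I6 l e} * betaR_set (I6 l) (Ms j)" if "j < n" for j
    using I6_piece_average[OF K valid_familyD(1)[OF assms(3) that] IH[OF that]] .
  have "(\<Sum>x\<in>S. I6_weight x) \<le> (\<Sum>j<n. g j * (\<Sum>x\<in>Ms j. I6_weight x))"
    using sum_le_sum_pieces[OF assms(3) \<open>finite S\<close>, where w = I6_weight] by (simp add: I6_weight_def)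
  then have "card K * (\<Sum>x\<in>S. I6_weight x) \<le> card K * (\<Sum>j<n. g j * (\<Sum>x\<in>Ms j. I6_weight x))"
    by (simp add: mult_left_mono)
  also have "\<dots> = (\<Sum>j<n. g j * (card K * (\<Sum>x\<in>Ms j. I6_weight x)))"
    by (simp add: sum_distrib_left mult.left_commute)
  also have "\<dots> \<le> (\<Sum>j<n. g j * (card {e\<in>K. \<not> Ms j \<subseteq> I6 l e} * betaR_set (I6 l) (Ms j)))"
    using piece valid_familyD(3)[OF assms(3)] by (intro sum_mono mult_left_mono) auto
  also have "\<dots> \<le> card K * family_cost (I6 l) (betaR_set (I6 l)) S n Ms g"
    using family_cost_average[OF \<open>finite S\<close>, where K = K and f = "betaR_set (I6 l)" and A = "I6 l"]
    unfolding K_def by (simp add: mult_ac)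
  finally show ?thesis using \<open>card K \<ge> 2\<close> by simp
qed

lemma I6_weight_le_betaR_set:
  assumes "S \<subseteq> {1..4*l+1}" "S \<noteq> {}"
  shows "(\<Sum>x\<in>S. I6_weight x) \<le> betaR_set (I6 l) S"
proof -
  have "finite S" using assms(1) finite_subset by blast
  then show ?thesis using assms
  proof (induction S rule: finite_psubset_induct)
    case (psubset S)
    show ?case
    proof (cases "card {x\<in>S. even x} \<le> 1")
      case True
      then show ?thesis using I6_weight_le_betaR_set_few_evens psubset.prems by blast
    next
      case False
      then have "card {x\<in>S. even x} \<ge> 2" by simp
      moreover have "card {x\<in>S. even x} \<le> card S"
        using psubset.hyps by (intro card_mono) auto
      ultimately have "card S \<ge> 2" by simp
      show ?thesis
      proof (rule betaR_set_geI[OF psubset.hyps(1) \<open>card S \<ge> 2\<close>])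
        fix n Ms g assume vf: "valid_family S n Ms g"
        show "(\<Sum>x\<in>S. I6_weight x) \<le> family_cost (I6 l) (betaR_set (I6 l)) S n Ms g"
        proof (rule I6_weight_le_family_cost_many_evens[OF psubset.prems(1) \<open>card {x\<in>S. even x} \<ge> 2\<close> vf])
          show "(\<Sum>x\<in>Ms j. I6_weight x) \<le> betaR_set (I6 l) (Ms j)" if "j < n" for j
            using psubset.IH valid_familyD(1,2)[OF vf that] psubset.prems(1) by blast
        qed
      qed
    qed
  qed
qed

section \<open>A cyclic family for \<open>I6\<close>\<close>

definition I6_next_block :: "nat \<Rightarrow> nat \<Rightarrow> nat" where
  "I6_next_block l j = (if j = 2*l then 0 else j + 1)"

definition I6_cycle_piece :: "nat \<Rightarrow> nat \<Rightarrow> nat set" where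
  "I6_cycle_piece l j = {x\<in>{1..4*l+1}. (x - 1) div 2 \<in> {j, I6_next_block l j}}"

lemma I6_next_block:
  assumes "l \<ge> 1" "j \<le> 2*l"
  shows "I6_next_block l j \<le> 2*l" "I6_next_block l j \<noteq> j"
  using assms by (auto simp: I6_next_block_def)

lemma I6_knows_other_block:
  assumes "i \<in> {1..4*l+1}" "b \<le> 2*l" "b \<noteq> (i - 1) div 2"
  shows "\<exists>z\<in>{1..4*l+1}. (z - 1) div 2 \<in> {(i - 1) div 2, b} \<and> z \<in> I6 l i"
proof -
  consider "even i" | "i = 4*l+1" | "b = 2*l" "odd i" "i \<noteq> 4*l+1" | "b < 2*l" "odd i" "i \<noteq> 4*l+1"
    using assms(2) by linarith
  then show ?thesis
  proof cases
    case 1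
    then obtain a where "i = 2*a" "a \<ge> 1" using assms(1) by (auto elim!: evenE)
    moreover have "(i - 1 - 1) div 2 = (i - 1) div 2" using \<open>i = 2*a\<close> by presburger
    ultimately show ?thesis using assms(1) 1 by (intro bexI[of _ "i - 1"]) (auto simp: I6_even)
  next
    case 2
    then show ?thesis using assms by (intro bexI[of _ "2*b + 1"]) (auto simp: I6_center[simplified])
  next
    case 3
    then show ?thesis using assms by (intro bexI[of _ "4*l + 1"]) (auto simp: I6_odd)
  next
    case 4
    then show ?thesis using assms by (intro bexI[of _ "2*b + 2"]) (auto simp: I6_odd elim!: oddE)
  qed
qed

lemma I6_block_le:
  assumes "(x::nat) \<in> {1..4*l+1}"
  shows "(x - 1) div 2 \<le> 2*l"
proof -
  have "x - 1 \<le> 4*l" using assms by auto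
  then show ?thesis using div_le_mono[of "x - 1" "4*l" 2] by simp
qed

lemma I6_cycle_piece_cover:
  assumes "l \<ge> 1" "x \<in> {1..4*l+1}"
  shows "card {j. j < 2*l+1 \<and> x \<in> I6_cycle_piece l j} = 2"
proof -
  define b where "b = (x - 1) div 2"
  have "b \<le> 2*l" unfolding b_def using assms(2) by (rule I6_block_le)
  have "x \<in> I6_cycle_piece l j \<longleftrightarrow> b = j \<or> b = (if j = 2*l then 0 else j + 1)" for j
    using assms(2) unfolding I6_cycle_piece_def I6_next_block_def b_def by auto
  then have "{j. j < 2*l+1 \<and> x \<in> I6_cycle_piece l j} = {b, if b = 0 then 2*l else b - 1}"
    using \<open>b \<le> 2*l\<close> by auto
  moreover have "b \<noteq> (if b = 0 then 2*l else b - 1)" using assms(1) by auto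
  ultimately show ?thesis by simp
qed

lemma I6_cycle_piece_subset: "I6_cycle_piece l j \<subseteq> {1..4*l+1}"
  by (auto simp: I6_cycle_piece_def)

lemma I6_cycle_piece_card:
  assumes "l \<ge> 1" "j \<le> 2*l"
  shows "2 \<le> card (I6_cycle_piece l j)" "card (I6_cycle_piece l j) \<le> 4"
proof -
  define j' where "j' = I6_next_block l j"
  have "j' \<le> 2*l" "j' \<noteq> j" unfolding j'_def using I6_next_block[OF assms] .
  have piece: "I6_cycle_piece l j = {x\<in>{1..4*l+1}. (x - 1) div 2 \<in> {j, j'}}"
    unfolding I6_cycle_piece_def j'_def ..
  have "finite (I6_cycle_piece l j)"
    using I6_cycle_piece_subset finite_subset by blast
  moreover have "{2*j + 1, 2*j' + 1} \<subseteq> I6_cycle_piece l j"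
    using assms(2) \<open>j' \<le> 2*l\<close> unfolding piece by auto
  moreover have "card {2*j + 1, 2*j' + 1} = 2" using \<open>j' \<noteq> j\<close> by simp
  ultimately show "2 \<le> card (I6_cycle_piece l j)" by (metis card_mono)
  have "x = 2*c + 1 \<or> x = 2*c + 2" if "(x - 1) div 2 = c" "1 \<le> x" for x c :: nat
    using that by presburger
  then have "I6_cycle_piece l j \<subseteq> set [2*j + 1, 2*j + 2, 2*j' + 1, 2*j' + 2]"
    unfolding piece by auto
  then have "card (I6_cycle_piece l j) \<le> card (set [2*j + 1, 2*j + 2, 2*j' + 1, 2*j' + 2])"
    by (intro card_mono) auto
  also have "\<dots> \<le> 4" using card_length[of "[2*j + 1, 2*j + 2, 2*j' + 1, 2*j' + 2]"] by simp
  finally show "card (I6_cycle_piece l j) \<le> 4" .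
qed

lemma valid_family_I6_cycle:
  assumes "l \<ge> 1"
  shows "valid_family {1..4*l+1} (2*l+1) (I6_cycle_piece l) (\<lambda>_. 1/2)"
  unfolding valid_family_def
proof (intro conjI allI impI ballI)
  fix j assume "j < 2*l+1"
  then have card: "2 \<le> card (I6_cycle_piece l j)" "card (I6_cycle_piece l j) \<le> 4"
    using I6_cycle_piece_card[OF assms] by simp_all
  then show "I6_cycle_piece l j \<noteq> {}" by auto
  have "card (I6_cycle_piece l j) < card {1..4*l+1}" using card assms by simp
  then show "I6_cycle_piece l j \<subset> {1..4*l+1}"
    using I6_cycle_piece_subset by (auto simp: psubset_eq)
qed (use I6_cycle_piece_cover[OF assms] in simp_all)

lemma betaR_set_I6_cycle_piece:
  assumes "l \<ge> 1" "j \<le> 2*l"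
  shows "betaR_set (I6 l) (I6_cycle_piece l j) \<le> real (card (I6_cycle_piece l j)) - 1"
proof -
  let ?P = "I6_cycle_piece l j"
  define j' where "j' = I6_next_block l j"
  have "j' \<le> 2*l" "j' \<noteq> j" unfolding j'_def using I6_next_block[OF assms] .
  have piece: "?P = {x\<in>{1..4*l+1}. (x - 1) div 2 \<in> {j, j'}}"
    unfolding I6_cycle_piece_def j'_def ..
  have "finite ?P" using I6_cycle_piece_subset finite_subset by blast
  have "card (?P - I6 l i) \<le> card ?P - 1" if "i \<in> ?P" for i
  proof -
    define b where "b = (if (i - 1) div 2 = j then j' else j)"
    have i: "i \<in> {1..4*l+1}" "b \<le> 2*l" "b \<noteq> (i - 1) div 2" and blocks: "{(i - 1) div 2, b} = {j, j'}"
      using that assms(2) \<open>j' \<le> 2*l\<close> \<open>j' \<noteq> j\<close> unfolding piece b_def by auto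
    then obtain z where z: "z \<in> {1..4*l+1}" "(z - 1) div 2 \<in> {(i - 1) div 2, b}" "z \<in> I6 l i"
      using I6_knows_other_block[OF i] by blast
    then have "z \<in> ?P" unfolding piece blocks by blast
    have "?P - I6 l i \<subseteq> ?P - {z}" using z(3) by blast
    then show ?thesis using \<open>finite ?P\<close> \<open>z \<in> ?P\<close> by (metis card_Diff_singleton card_mono finite_Diff)
  qed
  then have "betaR_set (I6 l) ?P \<le> real (card ?P - 1)"
    using \<open>finite ?P\<close> I6_cycle_piece_card[OF assms] by (intro betaR_set_le_card_unknown) auto
  then show ?thesis using I6_cycle_piece_card[OF assms] by (simp add: of_nat_diff)
qed

lemma sum_card_I6_cycle_piece:
  assumes "l \<ge> 1"
  shows "(\<Sum>j<2*l+1. 1/2 * real (card (I6_cycle_piece l j))) = 4*l+1"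
proof -
  have "(\<Sum>j<2*l+1. 1/2 * (\<Sum>x\<in>I6_cycle_piece l j. 1))
      = (\<Sum>x\<in>{1..4*l+1}. 1 * (\<Sum>j | j < 2*l+1 \<and> x \<in> I6_cycle_piece l j. 1/2 :: real))"
    using I6_cycle_piece_subset by (intro sum_pieces_swap) auto
  also have "\<dots> = (\<Sum>x\<in>{1..4*l+1}. 1)"
    using I6_cycle_piece_cover[OF assms] by simp
  finally show ?thesis by simp
qed

lemma betaR_I6_le:
  assumes "l \<ge> 1"
  shows "betaR (4*l+1) (I6 l) \<le> 3 * real l + 1/2"
proof -
  have "betaR (4*l+1) (I6 l) \<le> (\<Sum>j<2*l+1. 1/2 * betaR_set (I6 l) (I6_cycle_piece l j))"
    unfolding betaR_def using assms by (intro betaR_set_le_sum_pieces valid_family_I6_cycle) auto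
  also have "\<dots> \<le> (\<Sum>j<2*l+1. 1/2 * (real (card (I6_cycle_piece l j)) - 1))"
    using betaR_set_I6_cycle_piece[OF assms] by (intro sum_mono) auto
  also have "\<dots> = (\<Sum>j<2*l+1. 1/2 * real (card (I6_cycle_piece l j))) - (2*l+1)/2"
    by (simp add: right_diff_distrib sum_subtractf)
  also have "\<dots> = 3 * real l + 1/2"
    unfolding sum_card_I6_cycle_piece[OF assms] by (simp add: field_simps)
  finally show ?thesis .
qed

lemma sum_I6_weight_upto: "(\<Sum>x\<in>{1..2*n+1}. I6_weight x) = (3 * real n + 1) / 2"
  by (induction n) (simp_all add: I6_weight_def field_simps)

theorem proposition9:
  fixes l :: nat
  assumes "l \<ge> 1"
  shows "betaR (4*l+1) (I6 l) = 3 * real l + 1/2"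
proof -
  have "(\<Sum>x\<in>{1..4*l+1}. I6_weight x) \<le> betaR (4*l+1) (I6 l)"
    unfolding betaR_def by (rule I6_weight_le_betaR_set) auto
  moreover have "(\<Sum>x\<in>{1..4*l+1}. I6_weight x) = 3 * real l + 1/2"
    using sum_I6_weight_upto[of "2*l"] by (simp add: mult.assoc)
  ultimately show ?thesis using betaR_I6_le[OF assms] by linarith
qed

end
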